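(* Let $F_1,\dots,F_J:\mathbb{R}_+^N\to\mathbb{R}_+$ be upper semicontinuous, concave production functions that are homogeneous of degree 1 (i.e. $F_j(\lambda x)=\lambda F_j(x)$ for all $\lambda\ge 0$). Define the aggregate production function $F:\mathbb{R}_+^N\to\mathbb{R}_+$ by \[ F(x)=\max\Big\{\sum_{j=1}^J F_j(x_j): x_j\ge 0 \text{ for all } j,\ \sum_{j=1}^J x_j=x\Big\}. \] Take any $\bar{x}\in\mathbb{R}_{++}^N$ and let $w\in\mathbb{R}^N$ be a supergradient of $F$ at $\bar{x}$, that is, $F(x)-F(\bar{x})\le \langle w, x-\bar{x}\rangle$ for all $x\in\mathbb{R}_+^N$. Let $(\bar{x}_j)_{j=1}^J$ with $\bar{x}_j\ge 0$ and $\sum_{j=1}^J\bar{x}_j=\bar{x}$ be a solution of the maximization problem defining $F(\bar{x})$, and let $C$ be the smallest convex cone containing $\{\bar{x}_1,\dots,\bar{x}_J\}$. Then $F(x)=w\cdot x$ for all $x\in C$.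
   Context: $N$ inputs and one output; a production function is an upper semicontinuous map $\mathbb{R}_+^N\to\mathbb{R}_+$. There are $J$ firms with production functions $F_j$, and the aggregate production function $F$ is the maximum total output achievable by allocating the total input vector across firms. $w\cdot x$ and $\langle w,x\rangle$ denote the inner product. A set is a cone if it is closed under multiplication by nonnegative scalars. *)

theory Defs
  imports "HOL-Analysis.Analysis"
begin

text \<open>The nonnegative orthant R_+^N, with N the cardinality of the finite index type 'n.\<close>
definition nonneg_orthant :: "(real ^ 'n) set" where
  "nonneg_orthant = {x. \<forall>i. 0 \<le> x $ i}"

definition usc_on :: "('a::topological_space) set \<Rightarrow> ('a \<Rightarrow> real) \<Rightarrow> bool" where
  "usc_on S f \<longleftrightarrow> (\<forall>x\<in>S. \<forall>a. f x < a \<longrightarrow> eventually (\<lambda>y. f y < a) (at x within S))"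

definition production_function :: "(real ^ 'n \<Rightarrow> real) \<Rightarrow> bool" where
  "production_function f \<longleftrightarrow>
     (\<forall>x\<in>nonneg_orthant. 0 \<le> f x) \<and> usc_on nonneg_orthant f"

definition aggregate :: "('j::finite \<Rightarrow> real ^ 'n \<Rightarrow> real) \<Rightarrow> real ^ 'n \<Rightarrow> real" where
  "aggregate Fs x = Sup {(\<Sum>j\<in>UNIV. Fs j (xs j)) | xs.
       (\<forall>j. xs j \<in> nonneg_orthant) \<and> (\<Sum>j\<in>UNIV. xs j) = x}"

end

theory Submission
  imports Defs
begin

text \<open>
  A supergradient w of the aggregate F at xbar satisfies F y \<le> w \<bullet> y on the whole orthant:
  comparing F at 0 and at 2 xbar with F at xbar, and using F 0 \<ge> 0 and F (2 xbar) \<ge> 2 F xbar,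
  forces F xbar = w \<bullet> xbar. Each firm alone can use its share xbar_j, so
  F_j xbar_j \<le> F xbar_j \<le> w \<bullet> xbar_j, and these inequalities sum to an equality, hence
  F_j xbar_j = w \<bullet> xbar_j for every j. For x = \<Sum>_j c_j xbar_j with c_j \<ge> 0 the allocation
  (c_j xbar_j)_j then yields w \<bullet> x = \<Sum>_j c_j F_j xbar_j \<le> F x \<le> w \<bullet> x by homogeneity.
\<close>

lemma zero_in_nonneg_orthant [simp]: "0 \<in> nonneg_orthant"
  by (simp add: nonneg_orthant_def)

lemma add_in_nonneg_orthant:
  "x \<in> nonneg_orthant \<Longrightarrow> y \<in> nonneg_orthant \<Longrightarrow> x + y \<in> nonneg_orthant"
  by (simp add: nonneg_orthant_def)

lemma scaleR_in_nonneg_orthant: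
  "x \<in> nonneg_orthant \<Longrightarrow> 0 \<le> c \<Longrightarrow> c *\<^sub>R x \<in> nonneg_orthant"
  by (simp add: nonneg_orthant_def)

lemma sum_in_nonneg_orthant:
  "(\<And>j. j \<in> A \<Longrightarrow> f j \<in> nonneg_orthant) \<Longrightarrow> sum f A \<in> nonneg_orthant"
  by (auto simp: nonneg_orthant_def intro!: sum_nonneg)

lemma conic_nonneg_orthant: "conic nonneg_orthant"
  by (simp add: conic_def scaleR_in_nonneg_orthant)

lemma sum_minus_in_nonneg_orthant:
  assumes "finite A" "i \<in> A" "\<And>j. j \<in> A \<Longrightarrow> f j \<in> nonneg_orthant"
  shows "sum f A - f i \<in> nonneg_orthant"
  using assms by (simp add: sum.remove) (auto intro: sum_in_nonneg_orthant)

text \<open>Since x is the midpoint of y and 2 x - y, concavity bounds f y by 2 f x - f (2 x - y).\<close>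
lemma concave_nonneg_le_double:
  assumes conc: "concave_on nonneg_orthant f"
    and nonneg: "\<And>z. z \<in> nonneg_orthant \<Longrightarrow> 0 \<le> f z"
    and y: "y \<in> nonneg_orthant" and xy: "x - y \<in> nonneg_orthant"
  shows "f y \<le> 2 * f x"
proof -
  have x: "x \<in> nonneg_orthant"
    using add_in_nonneg_orthant [OF y xy] by simp
  have z: "x + (x - y) \<in> nonneg_orthant"
    using add_in_nonneg_orthant [OF x xy] .
  have "(1 - 1/2) * f y + (1/2) * f (x + (x - y)) \<le> f ((1 - 1/2) *\<^sub>R y + (1/2) *\<^sub>R (x + (x - y)))"
    using concave_onD [OF conc, of "1/2" y "x + (x - y)"] y z by simp
  also have "(1 - 1/2) *\<^sub>R y + (1/2::real) *\<^sub>R (x + (x - y)) = x"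
    by (simp add: algebra_simps scaleR_2 [symmetric])
  finally show ?thesis
    using nonneg [OF z] by simp
qed

lemma supergradient_inner_bound:
  fixes A :: "'a::real_inner \<Rightarrow> real"
  assumes "conic S" and x: "x \<in> S"
    and superg: "\<And>y. y \<in> S \<Longrightarrow> A y - A x \<le> w \<bullet> (y - x)"
    and "0 \<le> A 0" and "2 * A x \<le> A (2 *\<^sub>R x)"
  shows "A x = w \<bullet> x" and "\<And>y. y \<in> S \<Longrightarrow> A y \<le> w \<bullet> y"
proof -
  have "0 \<in> S" "2 *\<^sub>R x \<in> S"
    using \<open>conic S\<close> x by (auto simp: conic_def conic_contains_0)
  from superg [OF this(1)] superg [OF this(2)] assms(4,5)
  show eq: "A x = w \<bullet> x"
    by (simp add: inner_diff_right algebra_simps scaleR_2)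
  show "A y \<le> w \<bullet> y" if "y \<in> S" for y
    using superg [OF that] eq by (simp add: inner_diff_right)
qed

lemma convex_cone_hull_range_subset_nonneg_combinations:
  fixes v :: "'j::finite \<Rightarrow> 'a::real_vector"
  shows "convex_cone hull (range v) \<subseteq> {(\<Sum>j\<in>UNIV. c j *\<^sub>R v j) | c. \<forall>j. 0 \<le> c j}"
    (is "_ \<subseteq> ?K")
proof (rule hull_minimal)
  show "range v \<subseteq> ?K"
  proof
    fix x assume "x \<in> range v"
    then obtain i where "x = v i" by blast
    then have "x = (\<Sum>j\<in>UNIV. (if j = i then 1 else 0) *\<^sub>R v j)"
      by (simp add: if_distrib [of "\<lambda>a. a *\<^sub>R _"] cong: if_cong)
    then show "x \<in> ?K" by fastforce
  qed
  show "convex_cone ?K"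
    unfolding convex_cone_iff
  proof (intro conjI ballI allI impI)
    show "0 \<in> ?K"
      by (rule CollectI, rule exI [of _ "\<lambda>j. 0"]) simp
  next
    fix x y assume "x \<in> ?K" "y \<in> ?K"
    then obtain c d where "x = (\<Sum>j\<in>UNIV. c j *\<^sub>R v j)" "\<forall>j. 0 \<le> c j"
      and "y = (\<Sum>j\<in>UNIV. d j *\<^sub>R v j)" "\<forall>j. 0 \<le> d j" by blast
    then show "x + y \<in> ?K"
      by (intro CollectI exI [of _ "\<lambda>j. c j + d j"]) (auto simp: scaleR_add_left sum.distrib)
  next
    fix x and a :: real assume "x \<in> ?K" "0 \<le> a"
    then obtain c where "x = (\<Sum>j\<in>UNIV. c j *\<^sub>R v j)" "\<forall>j. 0 \<le> c j" by blast
    with \<open>0 \<le> a\<close> show "a *\<^sub>R x \<in> ?K"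
      by (intro CollectI exI [of _ "\<lambda>j. a * c j"]) (auto simp: scaleR_sum_right)
  qed
qed

locale concave_firms =
  fixes Fs :: "'j::finite \<Rightarrow> real ^ 'n \<Rightarrow> real"
  assumes concave: "\<And>j. concave_on nonneg_orthant (Fs j)"
    and nonneg: "\<And>j z. z \<in> nonneg_orthant \<Longrightarrow> 0 \<le> Fs j z"
begin

lemma allocation_le_aggregate:
  assumes xs: "\<And>j. xs j \<in> nonneg_orthant" and sum_xs: "(\<Sum>j\<in>UNIV. xs j) = x"
  shows "(\<Sum>j\<in>UNIV. Fs j (xs j)) \<le> aggregate Fs x"
proof -
  let ?outputs = "{(\<Sum>j\<in>UNIV. Fs j (ys j)) | ys.
                    (\<forall>j. ys j \<in> nonneg_orthant) \<and> (\<Sum>j\<in>UNIV. ys j) = x}"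
  have "bdd_above ?outputs"
  proof (rule bdd_aboveI)
    fix s assume "s \<in> ?outputs"
    then obtain ys where ys: "\<And>j. ys j \<in> nonneg_orthant" "(\<Sum>j\<in>UNIV. ys j) = x"
      and s: "s = (\<Sum>j\<in>UNIV. Fs j (ys j))" by blast
    have "Fs j (ys j) \<le> 2 * Fs j x" for j
      using concave_nonneg_le_double [OF concave nonneg ys(1)]
        sum_minus_in_nonneg_orthant [of UNIV j ys] ys by simp
    then show "s \<le> (\<Sum>j\<in>UNIV. 2 * Fs j x)"
      unfolding s by (rule sum_mono)
  qed
  moreover have "(\<Sum>j\<in>UNIV. Fs j (xs j)) \<in> ?outputs"
    using xs sum_xs by blast
  ultimately show ?thesis
    unfolding aggregate_def by (rule cSup_upper [rotated])
qed

lemma aggregate_zero_nonneg: "0 \<le> aggregate Fs 0"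
proof -
  have "0 \<le> (\<Sum>j\<in>UNIV. Fs j 0)"
    by (simp add: nonneg sum_nonneg)
  also have "\<dots> \<le> aggregate Fs 0"
    by (rule allocation_le_aggregate) simp_all
  finally show ?thesis .
qed

end

locale homogeneous_firms = concave_firms +
  assumes homogeneous:
    "\<And>j lam x. 0 \<le> lam \<Longrightarrow> x \<in> nonneg_orthant \<Longrightarrow> Fs j (lam *\<^sub>R x) = lam * Fs j x"
begin

lemma scaled_allocation_le_aggregate:
  assumes c: "\<And>j. 0 \<le> c j" and xs: "\<And>j. xs j \<in> nonneg_orthant"
  shows "(\<Sum>j\<in>UNIV. c j * Fs j (xs j)) \<le> aggregate Fs (\<Sum>j\<in>UNIV. c j *\<^sub>R xs j)"
proof -
  have "(\<Sum>j\<in>UNIV. c j * Fs j (xs j)) = (\<Sum>j\<in>UNIV. Fs j (c j *\<^sub>R xs j))"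
    by (simp add: homogeneous c xs)
  also have "\<dots> \<le> aggregate Fs (\<Sum>j\<in>UNIV. c j *\<^sub>R xs j)"
    by (rule allocation_le_aggregate) (simp_all add: scaleR_in_nonneg_orthant c xs)
  finally show ?thesis .
qed

context
  fixes xbar w xbars
  assumes superg: "\<And>x. x \<in> nonneg_orthant \<Longrightarrow>
                     aggregate Fs x - aggregate Fs xbar \<le> w \<bullet> (x - xbar)"
    and xbars_nonneg: "\<And>j. xbars j \<in> nonneg_orthant"
    and xbars_sum: "(\<Sum>j\<in>UNIV. xbars j) = xbar"
    and xbars_opt: "(\<Sum>j\<in>UNIV. Fs j (xbars j)) = aggregate Fs xbar"
begin

lemma aggregate_double_ge: "2 * aggregate Fs xbar \<le> aggregate Fs (2 *\<^sub>R xbar)"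
proof -
  have "2 * aggregate Fs xbar = (\<Sum>j\<in>UNIV. 2 * Fs j (xbars j))"
    by (simp add: xbars_opt [symmetric] sum_distrib_left)
  also have "\<dots> \<le> aggregate Fs (\<Sum>j\<in>UNIV. 2 *\<^sub>R xbars j)"
    by (rule scaled_allocation_le_aggregate) (simp_all add: xbars_nonneg)
  also have "(\<Sum>j\<in>UNIV. 2 *\<^sub>R xbars j) = 2 *\<^sub>R xbar"
    by (simp add: xbars_sum scaleR_sum_right [symmetric])
  finally show ?thesis .
qed

lemma supergradient_bounds:
  shows aggregate_eq_inner: "aggregate Fs xbar = w \<bullet> xbar"
    and aggregate_le_inner: "y \<in> nonneg_orthant \<Longrightarrow> aggregate Fs y \<le> w \<bullet> y"
proof -
  have xbar: "xbar \<in> nonneg_orthant"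
    unfolding xbars_sum [symmetric] by (rule sum_in_nonneg_orthant) (rule xbars_nonneg)
  note bound = supergradient_inner_bound
    [OF conic_nonneg_orthant xbar _ aggregate_zero_nonneg aggregate_double_ge]
  show "aggregate Fs xbar = w \<bullet> xbar"
    by (rule bound(1)) (rule superg)
  show "aggregate Fs y \<le> w \<bullet> y" if "y \<in> nonneg_orthant"
    by (rule bound(2) [OF _ that]) (rule superg)
qed

lemma share_output_le_inner: "Fs j (xbars j) \<le> w \<bullet> xbars j"
proof -
  let ?e = "\<lambda>k. if k = j then 1 else 0 :: real"
  have "Fs j (xbars j) = (\<Sum>k\<in>UNIV. ?e k * Fs k (xbars k))"
    by (simp add: if_distrib [of "\<lambda>c. c * _"] cong: if_cong)
  also have "\<dots> \<le> aggregate Fs (\<Sum>k\<in>UNIV. ?e k *\<^sub>R xbars k)"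
    by (rule scaled_allocation_le_aggregate) (simp_all add: xbars_nonneg)
  also have "(\<Sum>k\<in>UNIV. ?e k *\<^sub>R xbars k) = xbars j"
    by (simp add: if_distrib [of "\<lambda>c. c *\<^sub>R _"] cong: if_cong)
  also have "aggregate Fs (xbars j) \<le> w \<bullet> xbars j"
    by (rule aggregate_le_inner [OF xbars_nonneg])
  finally show ?thesis .
qed

lemma share_output_eq_inner: "Fs j (xbars j) = w \<bullet> xbars j"
proof (rule sum_mono_inv [OF _ share_output_le_inner])
  show "(\<Sum>k\<in>UNIV. Fs k (xbars k)) = (\<Sum>k\<in>UNIV. w \<bullet> xbars k)"
    by (simp add: xbars_opt aggregate_eq_inner inner_sum_right [symmetric] xbars_sum)
qed simp_all

lemma aggregate_eq_inner_on_cone: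
  assumes "x \<in> convex_cone hull (range xbars)"
  shows "aggregate Fs x = w \<bullet> x"
proof -
  obtain c where c: "\<And>j. 0 \<le> c j" and x: "x = (\<Sum>j\<in>UNIV. c j *\<^sub>R xbars j)"
    using assms convex_cone_hull_range_subset_nonneg_combinations by blast
  have "w \<bullet> x = (\<Sum>j\<in>UNIV. c j * Fs j (xbars j))"
    by (simp add: x inner_sum_right share_output_eq_inner)
  also have "\<dots> \<le> aggregate Fs x"
    unfolding x by (rule scaled_allocation_le_aggregate [OF c xbars_nonneg])
  moreover have "aggregate Fs x \<le> w \<bullet> x"
    by (rule aggregate_le_inner)
      (simp add: x c scaleR_in_nonneg_orthant sum_in_nonneg_orthant xbars_nonneg)
  ultimately show ?thesis by simp
qed

end

end

theorem theorem2:
  fixes Fs :: "'j::finite \<Rightarrow> real ^ 'n \<Rightarrow> real"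
    and xbar w :: "real ^ 'n"
    and xbars :: "'j \<Rightarrow> real ^ 'n"
  assumes prod: "\<And>j. production_function (Fs j)"
    and conc: "\<And>j. concave_on nonneg_orthant (Fs j)"
    and hom: "\<And>j lam x. lam \<ge> 0 \<Longrightarrow> x \<in> nonneg_orthant \<Longrightarrow> Fs j (lam *\<^sub>R x) = lam * Fs j x"
    and xbar_pos: "\<And>i. xbar $ i > 0"
    and superg: "\<And>x. x \<in> nonneg_orthant \<Longrightarrow>
                   aggregate Fs x - aggregate Fs xbar \<le> w \<bullet> (x - xbar)"
    and xbars_nonneg: "\<And>j. xbars j \<in> nonneg_orthant"
    and xbars_sum: "(\<Sum>j\<in>UNIV. xbars j) = xbar"
    and xbars_opt: "(\<Sum>j\<in>UNIV. Fs j (xbars j)) = aggregate Fs xbar"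
  shows "\<forall>x \<in> convex_cone hull (range xbars). aggregate Fs x = w \<bullet> x"
proof -
  interpret homogeneous_firms Fs
    by unfold_locales (use conc prod hom in \<open>auto simp: production_function_def\<close>)
  show ?thesis
    by (intro ballI aggregate_eq_inner_on_cone) (use superg xbars_nonneg xbars_sum xbars_opt in auto)
qed

end
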